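(* Let $(X,\leq)$ be a continuous dcpo and $p$ a partial metric on $X$ such that $\leq$ coincides with $\leq_p$. Then the following are equivalent: (1) $\mathcal O_p(X)\subseteq\mathcal O_\sigma(X)$; (2) open $p$-balls are finitely accessible, i.e. for every open ball $B^p_\epsilon(x)$ and every $y\in B^p_\epsilon(x)$ there is $y'\ll y$ with $y'\in B^p_\epsilon(x)$; (3) $p$ is Scott-continuous as a map into $([0,+\infty],\geq)$, i.e. for all $x\in X$ and all directed $\Delta\subseteq X$, $p(x,\bigvee\Delta)=\inf_{d\in\Delta}p(x,d)$.
   Context: A partial metric (PM) on $X$ is $p:X\times X\to[0,+\infty]$ with, for all $x,y,z$: $p(x,x)\leq p(x,y)$; if $p(x,x)=p(x,y)=p(y,y)$ then $x=y$; $p(x,y)=p(y,x)$; $p(x,y)\leq p(x,z)+p(z,y)-p(z,z)$. Its order: $x\leq_p y$ iff $p(x,y)\leq p(x,x)$. Open balls $B^p_\epsilon(x)=\{y\mid p(y,x)<p(x,x)+\epsilon\}$; $\mathcal O_p(X)$ is the topology of unions of open balls. In a dcpo, $x\ll y$ iff for every directed $\Delta$ with $y\leq\bigvee\Delta$ there is $d\in\Delta$ with $x\leq d$; a basis is $B\subseteq X$ such that for each $x$ the set $\{y\in B\mid y\ll x\}$ is directed with join $x$; a dcpo is continuous if it has a basis. $\mathcal O_\sigma(X)$ (Scott topology) consists of upper sets $U$ such that $x\in U$ implies $y\in U$ for some $y\ll x$. *)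

theory Defs
  imports "HOL-Library.Extended_Nonnegative_Real"
begin

text \<open>The triangle law p(x,y) \<le> p(x,z) + p(z,y) - p(z,z) is written additively,
  p(x,y) + p(z,z) \<le> p(x,z) + p(z,y), the standard form for extended values.\<close>
definition partial_metric :: "'a set \<Rightarrow> ('a \<Rightarrow> 'a \<Rightarrow> ennreal) \<Rightarrow> bool" where
  "partial_metric X p \<longleftrightarrow>
     (\<forall>x\<in>X. \<forall>y\<in>X. p x x \<le> p x y) \<and>
     (\<forall>x\<in>X. \<forall>y\<in>X. p x x = p x y \<and> p x y = p y y \<longrightarrow> x = y) \<and>
     (\<forall>x\<in>X. \<forall>y\<in>X. p x y = p y x) \<and>
     (\<forall>x\<in>X. \<forall>y\<in>X. \<forall>z\<in>X. p x y + p z z \<le> p x z + p z y)"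

definition pm_le :: "('a \<Rightarrow> 'a \<Rightarrow> ennreal) \<Rightarrow> 'a \<Rightarrow> 'a \<Rightarrow> bool" where
  "pm_le p x y \<longleftrightarrow> p x y \<le> p x x"

definition pm_ball :: "'a set \<Rightarrow> ('a \<Rightarrow> 'a \<Rightarrow> ennreal) \<Rightarrow> 'a \<Rightarrow> real \<Rightarrow> 'a set" where
  "pm_ball X p x \<epsilon> = {y\<in>X. p y x < p x x + ennreal \<epsilon>}"

definition pm_open :: "'a set \<Rightarrow> ('a \<Rightarrow> 'a \<Rightarrow> ennreal) \<Rightarrow> 'a set \<Rightarrow> bool" where
  "pm_open X p U \<longleftrightarrow>
     (\<exists>S. S \<subseteq> {pm_ball X p x \<epsilon> | x \<epsilon>. x \<in> X \<and> \<epsilon> > 0} \<and> U = \<Union>S)"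

definition partial_order_on' :: "'a set \<Rightarrow> ('a \<Rightarrow> 'a \<Rightarrow> bool) \<Rightarrow> bool" where
  "partial_order_on' X le \<longleftrightarrow>
     (\<forall>x\<in>X. le x x) \<and>
     (\<forall>x\<in>X. \<forall>y\<in>X. le x y \<and> le y x \<longrightarrow> x = y) \<and>
     (\<forall>x\<in>X. \<forall>y\<in>X. \<forall>z\<in>X. le x y \<and> le y z \<longrightarrow> le x z)"

definition directed_in :: "'a set \<Rightarrow> ('a \<Rightarrow> 'a \<Rightarrow> bool) \<Rightarrow> 'a set \<Rightarrow> bool" where
  "directed_in X le D \<longleftrightarrow> D \<subseteq> X \<and> D \<noteq> {} \<and>
     (\<forall>a\<in>D. \<forall>b\<in>D. \<exists>c\<in>D. le a c \<and> le b c)"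

definition is_lub_in :: "'a set \<Rightarrow> ('a \<Rightarrow> 'a \<Rightarrow> bool) \<Rightarrow> 'a set \<Rightarrow> 'a \<Rightarrow> bool" where
  "is_lub_in X le D s \<longleftrightarrow> s \<in> X \<and> (\<forall>d\<in>D. le d s) \<and>
     (\<forall>u\<in>X. (\<forall>d\<in>D. le d u) \<longrightarrow> le s u)"

definition dcpo_on :: "'a set \<Rightarrow> ('a \<Rightarrow> 'a \<Rightarrow> bool) \<Rightarrow> bool" where
  "dcpo_on X le \<longleftrightarrow> partial_order_on' X le \<and>
     (\<forall>D. directed_in X le D \<longrightarrow> (\<exists>s. is_lub_in X le D s))"

definition way_below :: "'a set \<Rightarrow> ('a \<Rightarrow> 'a \<Rightarrow> bool) \<Rightarrow> 'a \<Rightarrow> 'a \<Rightarrow> bool" where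
  "way_below X le x y \<longleftrightarrow>
     (\<forall>D s. directed_in X le D \<and> is_lub_in X le D s \<and> le y s \<longrightarrow> (\<exists>d\<in>D. le x d))"

definition is_basis :: "'a set \<Rightarrow> ('a \<Rightarrow> 'a \<Rightarrow> bool) \<Rightarrow> 'a set \<Rightarrow> bool" where
  "is_basis X le B \<longleftrightarrow> B \<subseteq> X \<and>
     (\<forall>x\<in>X. directed_in X le {y\<in>B. way_below X le y x} \<and>
             is_lub_in X le {y\<in>B. way_below X le y x} x)"

definition continuous_dcpo :: "'a set \<Rightarrow> ('a \<Rightarrow> 'a \<Rightarrow> bool) \<Rightarrow> bool" where
  "continuous_dcpo X le \<longleftrightarrow> dcpo_on X le \<and> (\<exists>B. is_basis X le B)"

text \<open>Scott-open sets, as defined in the paper for continuous dcpos.\<close>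
definition scott_open :: "'a set \<Rightarrow> ('a \<Rightarrow> 'a \<Rightarrow> bool) \<Rightarrow> 'a set \<Rightarrow> bool" where
  "scott_open X le U \<longleftrightarrow> U \<subseteq> X \<and>
     (\<forall>x\<in>U. \<forall>y\<in>X. le x y \<longrightarrow> y \<in> U) \<and>
     (\<forall>x\<in>U. \<exists>y\<in>U. way_below X le y x)"

end

theory Submission
  imports Defs
begin

text \<open>All three conditions are controlled by one observation: since the order is the one induced
  by p, the partial metric is antitone in each argument, so every open ball is an upper set.
  A ball is then Scott open exactly when it is finitely accessible, and a union of Scott
  open sets is Scott open, which gives (1) \<longleftrightarrow> (2). For a directed set D with join s,
  antitonicity gives p(x,s) \<le> inf p(x,D); the reverse inequality says that every ball
  around x containing s meets D, which follows from (2) because s is the join of D.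
  Conversely, if (3) holds, a point y of a ball is the join of the basis elements way
  below it, so by (3) one of them already lies in the ball.\<close>

definition pm_balls_finitely_accessible ::
    "'a set \<Rightarrow> ('a \<Rightarrow> 'a \<Rightarrow> bool) \<Rightarrow> ('a \<Rightarrow> 'a \<Rightarrow> ennreal) \<Rightarrow> bool" where
  "pm_balls_finitely_accessible X le p \<longleftrightarrow>
     (\<forall>x\<in>X. \<forall>\<epsilon>::real. \<epsilon> > 0 \<longrightarrow> (\<forall>y\<in>pm_ball X p x \<epsilon>.
        \<exists>y'\<in>X. way_below X le y' y \<and> y' \<in> pm_ball X p x \<epsilon>))"

definition pm_scott_continuous ::
    "'a set \<Rightarrow> ('a \<Rightarrow> 'a \<Rightarrow> bool) \<Rightarrow> ('a \<Rightarrow> 'a \<Rightarrow> ennreal) \<Rightarrow> bool" where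
  "pm_scott_continuous X le p \<longleftrightarrow>
     (\<forall>x\<in>X. \<forall>D s. directed_in X le D \<and> is_lub_in X le D s \<longrightarrow> p x s = (INF d\<in>D. p x d))"

lemma partial_metric_sym:
  "partial_metric X p \<Longrightarrow> x \<in> X \<Longrightarrow> y \<in> X \<Longrightarrow> p x y = p y x"
  unfolding partial_metric_def by blast

lemma partial_metric_self_le:
  "partial_metric X p \<Longrightarrow> x \<in> X \<Longrightarrow> y \<in> X \<Longrightarrow> p x x \<le> p x y"
  unfolding partial_metric_def by blast

lemma partial_metric_triangle:
  "partial_metric X p \<Longrightarrow> x \<in> X \<Longrightarrow> y \<in> X \<Longrightarrow> z \<in> X \<Longrightarrow> p x y + p z z \<le> p x z + p z y"
  unfolding partial_metric_def by blast

lemma partial_metric_antimono: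
  assumes pm: "partial_metric X p" and x: "x \<in> X" and y: "y \<in> X" and z: "z \<in> X"
    and "pm_le p x y"
  shows "p z y \<le> p z x"
proof (cases "p x x = \<infinity>")
  case True
  have "p x x \<le> p z x"
    using partial_metric_self_le[OF pm x z] partial_metric_sym[OF pm x z] by simp
  then show ?thesis using True by (simp add: top_unique)
next
  case False
  have "p x y = p x x"
    using \<open>pm_le p x y\<close> partial_metric_self_le[OF pm x y] unfolding pm_le_def by (rule antisym)
  then have "p x x + p z y \<le> p x x + p z x"
    using partial_metric_triangle[OF pm z y x] by (simp add: add.commute)
  then show ?thesis using False ennreal_add_left_cancel_le by blast
qed

lemma mem_pm_ball: "y \<in> pm_ball X p x \<epsilon> \<longleftrightarrow> y \<in> X \<and> p y x < p x x + ennreal \<epsilon>"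
  unfolding pm_ball_def by simp

lemma pm_ball_upclosed:
  assumes pm: "partial_metric X p" and x: "x \<in> X"
    and y: "y \<in> pm_ball X p x \<epsilon>" and y': "y' \<in> X" and "pm_le p y y'"
  shows "y' \<in> pm_ball X p x \<epsilon>"
proof -
  have yX: "y \<in> X" using y by (simp add: mem_pm_ball)
  have "p y' x = p x y'" using partial_metric_sym[OF pm y' x] .
  also have "\<dots> \<le> p x y" using partial_metric_antimono[OF pm yX y' x \<open>pm_le p y y'\<close>] .
  also have "\<dots> = p y x" using partial_metric_sym[OF pm x yX] .
  also have "\<dots> < p x x + ennreal \<epsilon>" using y by (simp add: mem_pm_ball)
  finally show ?thesis using y' by (simp add: mem_pm_ball)
qed

lemma pm_open_pm_ball: "x \<in> X \<Longrightarrow> \<epsilon> > 0 \<Longrightarrow> pm_open X p (pm_ball X p x \<epsilon>)"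
  unfolding pm_open_def by (rule exI[of _ "{pm_ball X p x \<epsilon>}"]) auto

lemma scott_open_Union:
  assumes "\<And>V. V \<in> S \<Longrightarrow> scott_open X le V"
  shows "scott_open X le (\<Union>S)"
  unfolding scott_open_def
proof (intro conjI ballI impI)
  show "\<Union>S \<subseteq> X" using assms unfolding scott_open_def by blast
next
  fix a b assume "a \<in> \<Union>S" "b \<in> X" "le a b"
  then show "b \<in> \<Union>S" using assms unfolding scott_open_def by blast
next
  fix a assume "a \<in> \<Union>S"
  then obtain V where "V \<in> S" "a \<in> V" by blast
  then obtain y where "y \<in> V" "way_below X le y a" using assms unfolding scott_open_def by blast
  then show "\<exists>y\<in>\<Union>S. way_below X le y a" using \<open>V \<in> S\<close> by blast
qed

lemma scott_open_pm_ball_iff: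
  assumes pm: "partial_metric X p" and leq: "\<forall>x\<in>X. \<forall>y\<in>X. le x y \<longleftrightarrow> pm_le p x y"
    and x: "x \<in> X"
  shows "scott_open X le (pm_ball X p x \<epsilon>) \<longleftrightarrow>
         (\<forall>y\<in>pm_ball X p x \<epsilon>. \<exists>y'\<in>pm_ball X p x \<epsilon>. way_below X le y' y)"
proof -
  have "pm_ball X p x \<epsilon> \<subseteq> X" by (auto simp: mem_pm_ball)
  moreover have "y' \<in> pm_ball X p x \<epsilon>"
    if y: "y \<in> pm_ball X p x \<epsilon>" and y': "y' \<in> X" and "le y y'" for y y'
  proof -
    have "y \<in> X" using y by (simp add: mem_pm_ball)
    then have "pm_le p y y'" using leq y' \<open>le y y'\<close> by blast
    then show ?thesis by (rule pm_ball_upclosed[OF pm x y y'])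
  qed
  ultimately show ?thesis unfolding scott_open_def by blast
qed

lemma pm_open_subset_scott_open_iff:
  assumes pm: "partial_metric X p" and leq: "\<forall>x\<in>X. \<forall>y\<in>X. le x y \<longleftrightarrow> pm_le p x y"
  shows "(\<forall>U. pm_open X p U \<longrightarrow> scott_open X le U) \<longleftrightarrow> pm_balls_finitely_accessible X le p"
proof
  assume pm_scott: "\<forall>U. pm_open X p U \<longrightarrow> scott_open X le U"
  show "pm_balls_finitely_accessible X le p"
    unfolding pm_balls_finitely_accessible_def
  proof (intro ballI allI impI)
    fix x \<epsilon> y assume x: "x \<in> X" and "\<epsilon> > 0" and y: "y \<in> pm_ball X p x \<epsilon>"
    have "scott_open X le (pm_ball X p x \<epsilon>)"
      using pm_scott pm_open_pm_ball[OF x \<open>\<epsilon> > 0\<close>] by blast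
    then obtain y' where "y' \<in> pm_ball X p x \<epsilon>" "way_below X le y' y"
      using y scott_open_pm_ball_iff[OF pm leq x] by blast
    then show "\<exists>y'\<in>X. way_below X le y' y \<and> y' \<in> pm_ball X p x \<epsilon>"
      by (auto simp: mem_pm_ball)
  qed
next
  assume acc: "pm_balls_finitely_accessible X le p"
  show "\<forall>U. pm_open X p U \<longrightarrow> scott_open X le U"
  proof (intro allI impI)
    fix U assume "pm_open X p U"
    then obtain S where S: "S \<subseteq> {pm_ball X p x \<epsilon> | x \<epsilon>. x \<in> X \<and> \<epsilon> > 0}" and U: "U = \<Union>S"
      unfolding pm_open_def by blast
    have "scott_open X le V" if "V \<in> S" for V
    proof -
      obtain x \<epsilon> where V: "V = pm_ball X p x \<epsilon>" and x: "x \<in> X" and "\<epsilon> > 0"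
        using S \<open>V \<in> S\<close> by blast
      have "\<forall>y\<in>V. \<exists>y'\<in>V. way_below X le y' y"
        using acc x \<open>\<epsilon> > 0\<close> unfolding V pm_balls_finitely_accessible_def by blast
      then show ?thesis unfolding V by (simp only: scott_open_pm_ball_iff[OF pm leq x])
    qed
    then show "scott_open X le U" unfolding U by (rule scott_open_Union)
  qed
qed

lemma ennreal_exists_pos_add_eq:
  fixes a b :: ennreal and e :: real
  assumes "a \<le> b" "b < top" "e > 0"
  shows "\<exists>\<epsilon>>0. a + ennreal \<epsilon> = b + ennreal e"
proof -
  have "a < top" using assms(1,2) by (rule le_less_trans)
  then obtain ra rb where "a = ennreal ra" "b = ennreal rb" "0 \<le> ra" "ra \<le> rb"
    using assms(1,2) by (cases a rule: ennreal_cases; cases b rule: ennreal_cases) auto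
  then show ?thesis
    using assms(3) by (intro exI[of _ "rb - ra + e"]) (simp flip: ennreal_plus)
qed

lemma finitely_accessible_imp_pm_scott_continuous:
  assumes pm: "partial_metric X p" and leq: "\<forall>x\<in>X. \<forall>y\<in>X. le x y \<longleftrightarrow> pm_le p x y"
    and acc: "pm_balls_finitely_accessible X le p"
  shows "pm_scott_continuous X le p"
  unfolding pm_scott_continuous_def
proof (intro ballI allI impI)
  fix x D s assume x: "x \<in> X" and Ds: "directed_in X le D \<and> is_lub_in X le D s"
  have DX: "D \<subseteq> X" and sX: "s \<in> X" and ub: "\<forall>d\<in>D. le d s"
    using Ds unfolding directed_in_def is_lub_in_def by auto
  have "p x s \<le> p x d" if "d \<in> D" for d
    using partial_metric_antimono[OF pm _ sX x] that ub leq DX sX by blast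
  then have lower: "p x s \<le> (INF d\<in>D. p x d)" by (rule INF_greatest)
  have "(INF d\<in>D. p x d) \<le> p x s"
  proof (rule ennreal_le_epsilon)
    fix e :: real assume fin: "p x s < top" and e: "e > 0"
    obtain \<epsilon> where "\<epsilon> > 0" and radius: "p x x + ennreal \<epsilon> = p x s + ennreal e"
      using ennreal_exists_pos_add_eq[OF partial_metric_self_le[OF pm x sX] fin e] by blast
    have "s \<in> pm_ball X p x \<epsilon>"
      using sX fin e radius partial_metric_sym[OF pm x sX] by (simp add: mem_pm_ball)
    then obtain y' where y': "y' \<in> X" "way_below X le y' s" "y' \<in> pm_ball X p x \<epsilon>"
      using acc x \<open>\<epsilon> > 0\<close> unfolding pm_balls_finitely_accessible_def by blast
    have "le s s" using leq sX unfolding pm_le_def by blast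
    then obtain d where d: "d \<in> D" "le y' d"
      using y'(2) Ds unfolding way_below_def by blast
    have "(INF d\<in>D. p x d) \<le> p x d" using d(1) by (rule INF_lower)
    also have "\<dots> \<le> p x y'"
      using partial_metric_antimono[OF pm y'(1) _ x] d DX leq y'(1) by blast
    also have "\<dots> < p x x + ennreal \<epsilon>"
      using y' partial_metric_sym[OF pm x y'(1)] by (simp add: mem_pm_ball)
    finally show "(INF d\<in>D. p x d) \<le> p x s + ennreal e" using radius by simp
  qed
  with lower show "p x s = (INF d\<in>D. p x d)" by (rule antisym)
qed

lemma pm_scott_continuous_imp_finitely_accessible:
  assumes pm: "partial_metric X p" and B: "is_basis X le B"
    and cont: "pm_scott_continuous X le p"
  shows "pm_balls_finitely_accessible X le p"
  unfolding pm_balls_finitely_accessible_def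
proof (intro ballI allI impI)
  fix x \<epsilon> y assume x: "x \<in> X" and "\<epsilon> > 0" and y: "y \<in> pm_ball X p x \<epsilon>"
  then have yX: "y \<in> X" by (simp add: mem_pm_ball)
  define D where "D = {b\<in>B. way_below X le b y}"
  have D: "directed_in X le D" "is_lub_in X le D y"
    using B yX unfolding is_basis_def D_def by auto
  have "(INF d\<in>D. p x d) = p x y"
    using cont x D unfolding pm_scott_continuous_def by auto
  also have "\<dots> = p y x" using partial_metric_sym[OF pm x yX] .
  also have "\<dots> < p x x + ennreal \<epsilon>" using y by (simp add: mem_pm_ball)
  finally obtain d where d: "d \<in> D" "p x d < p x x + ennreal \<epsilon>"
    by (auto simp: INF_less_iff)
  have dX: "d \<in> X" using D(1) d(1) unfolding directed_in_def by blast
  have "p d x < p x x + ennreal \<epsilon>" using d(2) partial_metric_sym[OF pm x dX] by simp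
  then show "\<exists>y'\<in>X. way_below X le y' y \<and> y' \<in> pm_ball X p x \<epsilon>"
    using d(1) dX unfolding D_def mem_pm_ball by blast
qed

theorem mainTheorem5:
  fixes X :: "'a set" and le :: "'a \<Rightarrow> 'a \<Rightarrow> bool" and p :: "'a \<Rightarrow> 'a \<Rightarrow> ennreal"
  assumes "continuous_dcpo X le"
    and "partial_metric X p"
    and "\<forall>x\<in>X. \<forall>y\<in>X. le x y \<longleftrightarrow> pm_le p x y"
  shows "((\<forall>U. pm_open X p U \<longrightarrow> scott_open X le U) \<longleftrightarrow>
          (\<forall>x\<in>X. \<forall>\<epsilon>::real. \<epsilon> > 0 \<longrightarrow> (\<forall>y\<in>pm_ball X p x \<epsilon>.
              \<exists>y'\<in>X. way_below X le y' y \<and> y' \<in> pm_ball X p x \<epsilon>))) \<and>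
         ((\<forall>x\<in>X. \<forall>\<epsilon>::real. \<epsilon> > 0 \<longrightarrow> (\<forall>y\<in>pm_ball X p x \<epsilon>.
              \<exists>y'\<in>X. way_below X le y' y \<and> y' \<in> pm_ball X p x \<epsilon>)) \<longleftrightarrow>
          (\<forall>x\<in>X. \<forall>D s. directed_in X le D \<and> is_lub_in X le D s \<longrightarrow>
              p x s = (INF d\<in>D. p x d)))"
proof -
  obtain B where B: "is_basis X le B"
    using assms(1) unfolding continuous_dcpo_def by blast
  have "(\<forall>U. pm_open X p U \<longrightarrow> scott_open X le U) \<longleftrightarrow> pm_balls_finitely_accessible X le p"
    using assms(2,3) by (rule pm_open_subset_scott_open_iff)
  moreover have "pm_balls_finitely_accessible X le p \<longleftrightarrow> pm_scott_continuous X le p"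
    using finitely_accessible_imp_pm_scott_continuous[OF assms(2,3)]
      pm_scott_continuous_imp_finitely_accessible[OF assms(2) B] by blast
  ultimately show ?thesis
    unfolding pm_balls_finitely_accessible_def pm_scott_continuous_def by blast
qed

end
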